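(* Let $p$ be an odd prime, $e\geq 2$, and $N$ cyclic of order $p^e$. Every transitive subgroup of $\mathrm{Hol}(N)$ has an element of order $p^e$.
   Context: $\mathrm{Hol}(N)=N\rtimes\mathrm{Aut}(N)$ acts on $N$ by $(\eta,\alpha)\cdot x=\eta\,\alpha(x)$; a subgroup is transitive if it acts transitively on $N$. *)

theory Defs
  imports "HOL-Algebra.Bij" "HOL-Algebra.Elementary_Groups" "HOL-Algebra.Multiplicative_Group" "HOL-Computational_Algebra.Primes"
begin

text \<open>Elements are pairs (eta, alpha) with
  eta in N and alpha an automorphism of N (extensional on the carrier, as in
  the library's AutoGroup). Multiplication:
  (eta, alpha)(eta', beta) = (eta * alpha(eta'), alpha o beta), so that the
  action (eta, alpha) . x = eta * alpha(x) is a left action.\<close>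

definition holomorph :: "('a, 'b) monoid_scheme \<Rightarrow> ('a \<times> ('a \<Rightarrow> 'a)) monoid" where
  "holomorph N =
    \<lparr>carrier = carrier N \<times> auto N,
     Group.monoid.mult = (\<lambda>(\<eta>, \<alpha>) (\<eta>', \<beta>). (\<eta> \<otimes>\<^bsub>N\<^esub> \<alpha> \<eta>', compose (carrier N) \<alpha> \<beta>)),
     Group.monoid.one = (\<one>\<^bsub>N\<^esub>, \<lambda>x\<in>carrier N. x)\<rparr>"

definition hol_action :: "('a, 'b) monoid_scheme \<Rightarrow> 'a \<times> ('a \<Rightarrow> 'a) \<Rightarrow> 'a \<Rightarrow> 'a" where
  "hol_action N h x = fst h \<otimes>\<^bsub>N\<^esub> snd h x"

definition transitive_on_N :: "('a, 'b) monoid_scheme \<Rightarrow> ('a \<times> ('a \<Rightarrow> 'a)) set \<Rightarrow> bool" where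
  "transitive_on_N N H \<longleftrightarrow>
     (\<forall>x\<in>carrier N. \<forall>y\<in>carrier N. \<exists>h\<in>H. hol_action N h x = y)"

end

theory Submission
  imports Defs
begin

(* Identify N = <g> with Z/p^e via g^k <-> k; every element of Hol(N) then acts as k |-> a k + b.
   A transitive H contains such an element with a = 1 (mod p) and b prime to p: if every element
   of H has a = 1 (mod p), take one sending 1 to g; otherwise some h in H with a - 1 prime to p
   has a fixed point x, and as Aut(N) is abelian the commutator of h with an element of H sending
   x to x g is the translation by g^(a-1).  The m-th power of such an element acts as
   k |-> a^m k + b (1 + a + ... + a^(m-1)), and for odd p the geometric sum over p^j terms is
   divisible by p^j but not by p^(j+1); hence the element has order p^e. *)

lemma holomorph_carrier_iff:
  "h \<in> carrier (holomorph N) \<longleftrightarrow> fst h \<in> carrier N \<and> snd h \<in> auto N"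
  by (cases h) (simp add: holomorph_def)

lemma holomorph_mult:
  "(\<eta>, \<alpha>) \<otimes>\<^bsub>holomorph N\<^esub> (\<eta>', \<beta>) = (\<eta> \<otimes>\<^bsub>N\<^esub> \<alpha> \<eta>', compose (carrier N) \<alpha> \<beta>)"
  by (simp add: holomorph_def)

lemma holomorph_one: "\<one>\<^bsub>holomorph N\<^esub> = (\<one>\<^bsub>N\<^esub>, \<lambda>x\<in>carrier N. x)"
  by (simp add: holomorph_def)

lemma AutoGroup_carrier: "carrier (AutoGroup G) = auto G"
  by (simp add: AutoGroup_def)

lemma AutoGroup_mult:
  "\<alpha> \<in> auto G \<Longrightarrow> \<beta> \<in> auto G \<Longrightarrow> \<alpha> \<otimes>\<^bsub>AutoGroup G\<^esub> \<beta> = compose (carrier G) \<alpha> \<beta>"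
  by (simp add: AutoGroup_def BijGroup_def auto_def)

lemma AutoGroup_mult_apply:
  "\<alpha> \<in> auto G \<Longrightarrow> \<beta> \<in> auto G \<Longrightarrow> x \<in> carrier G \<Longrightarrow> (\<alpha> \<otimes>\<^bsub>AutoGroup G\<^esub> \<beta>) x = \<alpha> (\<beta> x)"
  by (simp add: AutoGroup_mult compose_eq)

lemma AutoGroup_one: "\<one>\<^bsub>AutoGroup G\<^esub> = (\<lambda>x\<in>carrier G. x)"
  by (simp add: AutoGroup_def BijGroup_def)

context group
begin

lemma auto_closed: "\<alpha> \<in> auto G \<Longrightarrow> x \<in> carrier G \<Longrightarrow> \<alpha> x \<in> carrier G"
  by (auto simp: auto_def intro: hom_in_carrier)

lemma auto_mult: "\<alpha> \<in> auto G \<Longrightarrow> x \<in> carrier G \<Longrightarrow> y \<in> carrier G \<Longrightarrow> \<alpha> (x \<otimes> y) = \<alpha> x \<otimes> \<alpha> y"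
  by (simp add: auto_def hom_mult)

lemma auto_one: "\<alpha> \<in> auto G \<Longrightarrow> \<alpha> \<one> = \<one>"
  by (simp add: auto_def hom_one is_group)

lemma holomorph_mult_AutoGroup:
  assumes "\<alpha> \<in> auto G" "\<beta> \<in> auto G"
  shows "(\<eta>, \<alpha>) \<otimes>\<^bsub>holomorph G\<^esub> (\<eta>', \<beta>) = (\<eta> \<otimes> \<alpha> \<eta>', \<alpha> \<otimes>\<^bsub>AutoGroup G\<^esub> \<beta>)"
  using assms by (simp add: holomorph_mult AutoGroup_mult)

theorem group_holomorph: "group (holomorph G)"
proof -
  interpret A: group "AutoGroup G" by (rule AutoGroup)
  show ?thesis
  proof (rule groupI)
    fix h h' assume "h \<in> carrier (holomorph G)" "h' \<in> carrier (holomorph G)"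
    then show "h \<otimes>\<^bsub>holomorph G\<^esub> h' \<in> carrier (holomorph G)"
      by (cases h, cases h')
        (auto simp: holomorph_carrier_iff holomorph_mult_AutoGroup auto_closed
           simp flip: AutoGroup_carrier)
  next
    show "\<one>\<^bsub>holomorph G\<^esub> \<in> carrier (holomorph G)"
      by (simp add: holomorph_carrier_iff holomorph_one id_in_auto)
  next
    fix h h' h'' assume "h \<in> carrier (holomorph G)" "h' \<in> carrier (holomorph G)"
      "h'' \<in> carrier (holomorph G)"
    then show "h \<otimes>\<^bsub>holomorph G\<^esub> h' \<otimes>\<^bsub>holomorph G\<^esub> h'' =
        h \<otimes>\<^bsub>holomorph G\<^esub> (h' \<otimes>\<^bsub>holomorph G\<^esub> h'')"
      by (cases h, cases h', cases h'')
        (auto simp: holomorph_carrier_iff holomorph_mult_AutoGroup auto_closed auto_mult m_assoc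
           A.m_assoc[unfolded AutoGroup_carrier] AutoGroup_mult_apply A.m_closed[simplified AutoGroup_carrier])
  next
    fix h assume "h \<in> carrier (holomorph G)"
    then show "\<one>\<^bsub>holomorph G\<^esub> \<otimes>\<^bsub>holomorph G\<^esub> h = h"
      by (cases h) (auto simp: holomorph_carrier_iff holomorph_one id_in_auto
          holomorph_mult_AutoGroup A.l_one[unfolded AutoGroup_carrier AutoGroup_one])
  next
    fix h assume h: "h \<in> carrier (holomorph G)"
    then obtain \<eta> \<alpha> where h_eq: "h = (\<eta>, \<alpha>)" and \<eta>: "\<eta> \<in> carrier G" and \<alpha>: "\<alpha> \<in> auto G"
      by (cases h) (auto simp: holomorph_carrier_iff)
    define \<alpha>' where "\<alpha>' = inv\<^bsub>AutoGroup G\<^esub> \<alpha>"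
    have \<alpha>': "\<alpha>' \<in> auto G" "\<alpha>' \<otimes>\<^bsub>AutoGroup G\<^esub> \<alpha> = \<one>\<^bsub>AutoGroup G\<^esub>"
      using \<alpha> by (simp_all add: \<alpha>'_def flip: AutoGroup_carrier)
    have "\<alpha>' (inv \<eta>) \<otimes> \<alpha>' \<eta> = \<one>"
      using \<alpha>' \<eta> by (simp flip: auto_mult add: auto_one)
    then have "(\<alpha>' (inv \<eta>), \<alpha>') \<otimes>\<^bsub>holomorph G\<^esub> h = \<one>\<^bsub>holomorph G\<^esub>"
      using \<alpha> \<alpha>' by (simp add: h_eq holomorph_mult_AutoGroup holomorph_one AutoGroup_one)
    moreover have "(\<alpha>' (inv \<eta>), \<alpha>') \<in> carrier (holomorph G)"
      using \<alpha>' \<eta> by (simp add: holomorph_carrier_iff auto_closed)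
    ultimately show "\<exists>h'\<in>carrier (holomorph G). h' \<otimes>\<^bsub>holomorph G\<^esub> h = \<one>\<^bsub>holomorph G\<^esub>"
      by blast
  qed
qed

lemma snd_hom_holomorph: "snd \<in> hom (holomorph G) (AutoGroup G)"
  by (rule homI) (auto simp: holomorph_carrier_iff AutoGroup_carrier holomorph_mult_AutoGroup)

lemma hol_action_mult:
  assumes "h \<in> carrier (holomorph G)" "h' \<in> carrier (holomorph G)" "x \<in> carrier G"
  shows "hol_action G (h \<otimes>\<^bsub>holomorph G\<^esub> h') x = hol_action G h (hol_action G h' x)"
  using assms
  by (cases h, cases h')
    (auto simp: holomorph_carrier_iff holomorph_mult hol_action_def compose_eq auto_mult
      auto_closed m_assoc)

end

(* Restricted to the carrier, so that it can coincide with an (extensional) automorphism. *)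
definition int_pow_map :: "('a, 'b) monoid_scheme \<Rightarrow> int \<Rightarrow> 'a \<Rightarrow> 'a" where
  "int_pow_map G k = (\<lambda>x\<in>carrier G. x [^]\<^bsub>G\<^esub> k)"

context group
begin

lemma int_pow_map_apply: "x \<in> carrier G \<Longrightarrow> int_pow_map G k x = x [^] k"
  by (simp add: int_pow_map_def)

lemma int_pow_map_1: "int_pow_map G 1 = (\<lambda>x\<in>carrier G. x)"
  by (auto simp: int_pow_map_def intro!: restrict_ext)

lemma compose_int_pow_map:
  "compose (carrier G) (int_pow_map G a) (int_pow_map G b) = int_pow_map G (a * b)"
  by (auto simp: int_pow_map_def compose_def int_pow_pow mult.commute)

lemma auto_cyclic_eq_int_pow_map:
  assumes g: "g \<in> carrier G" and gen: "carrier G = range (\<lambda>k::int. g [^] k)"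
    and \<alpha>: "\<alpha> \<in> auto G"
  obtains a where "\<alpha> = int_pow_map G a"
proof -
  obtain a :: int where a: "\<alpha> g = g [^] a"
    using auto_closed[OF \<alpha> g] gen by auto
  have "\<alpha> x = x [^] a" if x: "x \<in> carrier G" for x
  proof -
    obtain k :: int where "x = g [^] k" using x unfolding gen by blast
    moreover have "\<alpha> (g [^] k) = \<alpha> g [^] k"
      using \<alpha> g by (simp add: auto_def hom_int_pow is_group)
    ultimately show ?thesis
      using g a by (simp add: int_pow_pow mult.commute)
  qed
  moreover have "\<alpha> \<in> extensional (carrier G)"
    using \<alpha> by (simp add: auto_def Bij_def)
  ultimately have "\<alpha> = int_pow_map G a"
    by (auto simp: int_pow_map_def extensional_def)
  then show thesis by (rule that)
qed

lemma comm_group_AutoGroup_cyclic: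
  assumes "cyclic_group G"
  shows "comm_group (AutoGroup G)"
proof (rule group.group_comm_groupI[OF AutoGroup])
  obtain g where g: "g \<in> carrier G" and gen: "carrier G = range (\<lambda>k::int. g [^] k)"
    using assms cyclic_group by blast
  fix \<alpha> \<beta> assume "\<alpha> \<in> carrier (AutoGroup G)" "\<beta> \<in> carrier (AutoGroup G)"
  moreover from this obtain a b where "\<alpha> = int_pow_map G a" "\<beta> = int_pow_map G b"
    by (metis AutoGroup_carrier auto_cyclic_eq_int_pow_map g gen)
  ultimately show "\<alpha> \<otimes>\<^bsub>AutoGroup G\<^esub> \<beta> = \<beta> \<otimes>\<^bsub>AutoGroup G\<^esub> \<alpha>"
    by (simp add: AutoGroup_carrier AutoGroup_mult compose_int_pow_map mult.commute)
qed

lemma snd_commutator_holomorph: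
  assumes "comm_group (AutoGroup G)"
    and "h \<in> carrier (holomorph G)" "h' \<in> carrier (holomorph G)"
  shows "snd (h \<otimes>\<^bsub>holomorph G\<^esub> h' \<otimes>\<^bsub>holomorph G\<^esub> inv\<^bsub>holomorph G\<^esub> (h' \<otimes>\<^bsub>holomorph G\<^esub> h))
    = (\<lambda>x\<in>carrier G. x)"
proof -
  interpret Hol: group "holomorph G" by (rule group_holomorph)
  interpret A: comm_group "AutoGroup G" by fact
  interpret group_hom "holomorph G" "AutoGroup G" snd
    by (simp add: group_hom_def group_hom_axioms_def Hol.is_group A.is_group snd_hom_holomorph)
  show ?thesis
    using assms by (simp add: A.m_comm[of "snd h"] A.r_inv flip: AutoGroup_one)
qed

end

lemma geometric_sum_add:
  fixes a :: "'a::comm_semiring_1"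
  shows "(\<Sum>i<m + q. a ^ i) = (\<Sum>i<m. a ^ i) + a ^ m * (\<Sum>i<q. a ^ i)"
  by (induction q) (simp_all add: algebra_simps power_add)

lemma geometric_sum_mult:
  fixes a :: "'a::comm_semiring_1"
  shows "(\<Sum>i<m * q. a ^ i) = (\<Sum>i<m. a ^ i) * (\<Sum>i<q. (a ^ m) ^ i)"
proof (induction q)
  case (Suc q)
  have "(\<Sum>i<m * Suc q. a ^ i) = (\<Sum>i<m * q + m. a ^ i)"
    by (simp add: add.commute)
  also have "\<dots> = (\<Sum>i<m * q. a ^ i) + a ^ (m * q) * (\<Sum>i<m. a ^ i)"
    by (rule geometric_sum_add)
  finally show ?case
    using Suc by (simp add: power_mult algebra_simps)
qed simp

lemma square_dvd_power_minus_linear: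
  fixes t :: int
  shows "t\<^sup>2 dvd (1 + t) ^ i - (1 + int i * t)"
proof (induction i)
  case (Suc i)
  have "(1 + t) ^ Suc i - (1 + int (Suc i) * t) = (1 + t) * ((1 + t) ^ i - (1 + int i * t)) + int i * t\<^sup>2"
    by (simp add: algebra_simps power2_eq_square)
  with Suc show ?case by simp
qed simp

lemma double_gauss_sum_lessThan: "2 * (\<Sum>i<m. int i) = int m * (int m - 1)"
  by (induction m) (simp_all add: algebra_simps)

(* Fails for p = 2: 1 + 3 is not 2 modulo 4. *)
lemma square_dvd_geometric_sum_odd:
  assumes "odd p" and "int p dvd a - 1"
  shows "int p ^ 2 dvd (\<Sum>i<p. a ^ i) - int p"
proof -
  define t where "t = a - 1"
  obtain w where w: "t = int p * w" using assms(2) by (auto simp: t_def)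
  obtain q where q: "p = 2 * q + 1" using assms(1) oddE by blast
  have gauss: "(\<Sum>i<p. int i) = int p * int q"
    using double_gauss_sum_lessThan[of p] q by simp
  have split: "(\<Sum>i<p. a ^ i) - int p = (\<Sum>i<p. (1 + t) ^ i - (1 + int i * t)) + t * (\<Sum>i<p. int i)"
    by (simp add: t_def sum_subtractf sum.distrib sum_distrib_left algebra_simps)
  have "int p ^ 2 dvd t\<^sup>2"
    by (simp add: w power_mult_distrib)
  then have "int p ^ 2 dvd (\<Sum>i<p. (1 + t) ^ i - (1 + int i * t))"
    by (blast intro: dvd_sum dvd_trans square_dvd_power_minus_linear)
  moreover have "int p ^ 2 dvd t * (\<Sum>i<p. int i)"
    by (simp add: gauss w power2_eq_square)
  ultimately show ?thesis
    unfolding split by (rule dvd_add)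
qed

lemma geometric_sum_prime_power:
  assumes "odd p" and "int p dvd a - 1"
  shows "\<exists>u. (\<Sum>i<p ^ k. a ^ i) = int p ^ k * (1 + int p * u)"
proof (induction k)
  case (Suc k)
  then obtain u where u: "(\<Sum>i<p ^ k. a ^ i) = int p ^ k * (1 + int p * u)" ..
  have "a - 1 dvd a ^ p ^ k - 1"
    by (simp add: power_diff_1_eq)
  then have "int p dvd (a ^ p ^ k) - 1"
    using assms(2) by (rule dvd_trans[rotated])
  then obtain z where "(\<Sum>i<p. (a ^ p ^ k) ^ i) - int p = int p ^ 2 * z"
    by (elim dvdE square_dvd_geometric_sum_odd[OF assms(1), elim_format])
  then have z: "(\<Sum>i<p. (a ^ p ^ k) ^ i) = int p * (1 + int p * z)"
    by (simp add: algebra_simps power2_eq_square)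
  have "(\<Sum>i<p ^ Suc k. a ^ i) = (\<Sum>i<p ^ k. a ^ i) * (\<Sum>i<p. (a ^ p ^ k) ^ i)"
    by (simp only: power_Suc2 geometric_sum_mult)
  also have "\<dots> = int p ^ Suc k * (1 + int p * (u + z + int p * u * z))"
    by (simp add: u z algebra_simps)
  finally show ?case ..
qed simp

lemma prime_power_dvd_geometric_sum_iff:
  assumes "prime p" "odd p" "int p dvd a - 1" "\<not> int p dvd b"
  shows "int p ^ j dvd b * (\<Sum>i<p ^ k. a ^ i) \<longleftrightarrow> j \<le> k"
proof -
  obtain u where u: "(\<Sum>i<p ^ k. a ^ i) = int p ^ k * (1 + int p * u)"
    using geometric_sum_prime_power[OF assms(2,3)] ..
  have p: "prime (int p)" using assms(1) by simp
  have "\<not> int p dvd 1 + int p * u"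
    using assms(1) by (auto simp: dvd_add_left_iff dest: prime_gt_1_nat)
  then have not_dvd: "\<not> int p dvd b * (1 + int p * u)"
    using assms(4) p by (simp add: prime_dvd_mult_iff)
  show ?thesis
  proof
    assume "int p ^ j dvd b * (\<Sum>i<p ^ k. a ^ i)"
    show "j \<le> k"
    proof (rule ccontr)
      assume "\<not> j \<le> k"
      then have "int p ^ Suc k dvd int p ^ j"
        by (intro le_imp_power_dvd) simp
      also have "\<dots> dvd int p ^ k * (b * (1 + int p * u))"
        using \<open>int p ^ j dvd _\<close> by (simp add: u algebra_simps)
      finally show False
        using not_dvd p by (simp add: prime_gt_0_int)
    qed
  qed (simp add: u le_imp_power_dvd)
qed

context group
begin

lemma holomorph_pow_int_pow_map:
  assumes "\<eta> \<in> carrier G"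
  shows "(\<eta>, int_pow_map G a) [^]\<^bsub>holomorph G\<^esub> m
    = (\<eta> [^] (\<Sum>i<m. a ^ i), int_pow_map G (a ^ m))"
proof (induction m)
  case 0
  show ?case by (simp add: holomorph_one int_pow_map_1 restrict_def)
next
  case (Suc m)
  then show ?case
    using assms
    by (simp add: holomorph_mult compose_int_pow_map int_pow_map_apply int_pow_mult mult.commute)
qed

lemma ord_eq_prime_power:
  assumes "x \<in> carrier G" "prime p" "x [^] (p ^ Suc k) = \<one>" "x [^] (p ^ k) \<noteq> \<one>"
  shows "ord x = p ^ Suc k"
proof -
  have "ord x dvd p ^ Suc k"
    using assms(1,3) pow_eq_id by blast
  then obtain i where i: "i \<le> Suc k" "ord x = p ^ i"
    using divides_primepow_nat[OF assms(2)] by blast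
  have "\<not> i \<le> k"
    using assms(1,4) i(2) by (auto simp: pow_eq_id le_imp_power_dvd)
  with i show ?thesis
    by (simp add: le_Suc_eq)
qed

lemma ord_holomorph_int_pow_map:
  assumes order: "order G = p ^ Suc k"
    and g: "g \<in> carrier G" "ord g = p ^ Suc k"
    and p: "prime p" "odd p"
    and ab: "int p dvd a - 1" "\<not> int p dvd b"
    and h: "(g [^] b, int_pow_map G a) \<in> carrier (holomorph G)"
  shows "group.ord (holomorph G) (g [^] b, int_pow_map G a) = p ^ Suc k"
proof -
  interpret Hol: group "holomorph G" by (rule group_holomorph)
  have pow: "(g [^] b, int_pow_map G a) [^]\<^bsub>holomorph G\<^esub> m
      = (g [^] (b * (\<Sum>i<m. a ^ i)), int_pow_map G (a ^ m))" for m
    using g by (simp add: holomorph_pow_int_pow_map int_pow_pow)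
  have bS_dvd_iff: "int p ^ Suc k dvd b * (\<Sum>i<p ^ m. a ^ i) \<longleftrightarrow> Suc k \<le> m" for m
    using prime_power_dvd_geometric_sum_iff[OF p ab] .
  have "int p ^ Suc k dvd (\<Sum>i<p ^ Suc k. a ^ i)"
    using geometric_sum_prime_power[OF p(2) ab(1), of "Suc k"] by auto
  then have "int p ^ Suc k dvd a ^ p ^ Suc k - 1"
    by (simp add: power_diff_1_eq)
  moreover have "int (ord x) dvd int p ^ Suc k" if "x \<in> carrier G" for x
    using ord_dvd_group_order[OF that] order by (metis int_dvd_int_iff of_nat_power)
  ultimately have "x [^] (1::int) = x [^] (a ^ p ^ Suc k)" if "x \<in> carrier G" for x
    using int_pow_eq[OF that] that by (blast intro: dvd_trans)
  then have "int_pow_map G (a ^ p ^ Suc k) = int_pow_map G 1"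
    by (auto simp: int_pow_map_def intro!: restrict_ext)
  moreover have "g [^] (b * (\<Sum>i<p ^ Suc k. a ^ i)) = \<one>"
    using bS_dvd_iff[of "Suc k"] g by (simp add: int_pow_eq_id)
  moreover have "g [^] (b * (\<Sum>i<p ^ k. a ^ i)) \<noteq> \<one>"
    using bS_dvd_iff[of k] g by (simp add: int_pow_eq_id)
  ultimately show ?thesis
    using h p(1) by (intro Hol.ord_eq_prime_power) (simp_all add: pow holomorph_one int_pow_map_1)
qed

end

lemma (in group) int_pow_map_translate_fixed_point:
  assumes g: "g \<in> carrier G" and gen: "carrier G = range (\<lambda>k::int. g [^] k)"
    and cop: "coprime (a - 1) (int (ord g))" and \<eta>: "\<eta> \<in> carrier G"
  obtains x where "x \<in> carrier G" "\<eta> \<otimes> x [^] a = x"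
proof -
  obtain c :: int where c: "\<eta> = g [^] c" using \<eta> unfolding gen by blast
  obtain u v where uv: "u * (a - 1) + v * int (ord g) = 1"
    using bezout_int[of "a - 1" "int (ord g)"] cop by auto
  have "- c * u - (c + a * (- c * u)) = - (c * v) * int (ord g)"
    using arg_cong[OF uv, of "\<lambda>t. c * t"] by (simp add: algebra_simps)
  then have "g [^] (c + a * (- c * u)) = g [^] (- c * u)"
    using g by (simp add: int_pow_eq)
  moreover have "\<eta> \<otimes> (g [^] (- c * u)) [^] a = g [^] (c + a * (- c * u))"
    using g by (simp add: c int_pow_pow mult.commute flip: int_pow_mult)
  ultimately have "\<eta> \<otimes> (g [^] (- c * u)) [^] a = g [^] (- c * u)"
    by simp
  then show thesis
    using g by (intro that) auto
qed

lemma (in comm_group) holomorph_commutator_eq: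
  assumes "comm_group (AutoGroup G)"
    and h: "h \<in> carrier (holomorph G)" "h' \<in> carrier (holomorph G)"
    and a: "snd h = int_pow_map G a"
    and x: "x \<in> carrier G" and g: "g \<in> carrier G"
    and fix_x: "hol_action G h x = x" and shift_x: "hol_action G h' x = x \<otimes> g"
  shows "h \<otimes>\<^bsub>holomorph G\<^esub> h' \<otimes>\<^bsub>holomorph G\<^esub> inv\<^bsub>holomorph G\<^esub> (h' \<otimes>\<^bsub>holomorph G\<^esub> h)
    = (g [^] (a - 1), int_pow_map G 1)"
    (is "?c = _")
proof -
  interpret Hol: group "holomorph G" by (rule group_holomorph)
  have c: "?c \<in> carrier (holomorph G)"
    using h by simp
  have snd_c: "snd ?c = int_pow_map G 1"
    using snd_commutator_holomorph[OF assms(1) h] by (simp add: int_pow_map_1)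
  have "?c \<otimes>\<^bsub>holomorph G\<^esub> (h' \<otimes>\<^bsub>holomorph G\<^esub> h) = h \<otimes>\<^bsub>holomorph G\<^esub> h'"
    using h by (simp add: Hol.m_assoc)
  then have "hol_action G ?c (hol_action G h' (hol_action G h x)) = hol_action G h (hol_action G h' x)"
    using h c x by (simp flip: hol_action_mult)
  then have "fst ?c \<otimes> (x \<otimes> g) = fst h \<otimes> (x \<otimes> g) [^] a"
    using fix_x shift_x x g snd_c a by (simp add: hol_action_def int_pow_map_apply)
  also have "\<dots> = (fst h \<otimes> x [^] a) \<otimes> g [^] a"
    using h x g by (simp add: holomorph_carrier_iff int_pow_distrib m_assoc)
  also have "fst h \<otimes> x [^] a = x"
    using fix_x x a by (simp add: hol_action_def int_pow_map_apply)
  also have "g [^] a = g [^] (a - 1) \<otimes> g"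
    using g int_pow_mult[OF g, of "a - 1" 1] by simp
  finally have "fst ?c \<otimes> g \<otimes> x = g [^] (a - 1) \<otimes> g \<otimes> x"
    using c x g by (simp add: holomorph_carrier_iff m_ac)
  then have "fst ?c = g [^] (a - 1)"
    using c x g by (simp add: holomorph_carrier_iff)
  with snd_c show ?thesis
    by (simp add: prod_eq_iff)
qed

lemma (in group) transitive_subgroup_holomorph_contains_translation:
  assumes g: "g \<in> carrier G" and gen: "carrier G = range (\<lambda>k::int. g [^] k)"
    and H: "subgroup H (holomorph G)" and trans: "transitive_on_N G H"
    and h: "h \<in> H" "snd h = int_pow_map G a" and cop: "coprime (a - 1) (int (ord g))"
  shows "(g [^] (a - 1), int_pow_map G 1) \<in> H"
proof -
  have cyc: "cyclic_group G"
    using g gen cyclic_group by blast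
  interpret comm_group G
    using cyc by (rule cyclic_imp_abelian_group)
  interpret Hol: group "holomorph G" by (rule group_holomorph)
  interpret H: subgroup H "holomorph G" by (rule H)
  have h_carrier: "h \<in> carrier (holomorph G)"
    using h(1) H.subset by blast
  then have "fst h \<in> carrier G"
    by (simp add: holomorph_carrier_iff)
  then obtain x where x: "x \<in> carrier G" "fst h \<otimes> x [^] a = x"
    using int_pow_map_translate_fixed_point[OF g gen cop] by blast
  then have fix_x: "hol_action G h x = x"
    using h(2) by (simp add: hol_action_def int_pow_map_apply)
  obtain h' where h': "h' \<in> H" "hol_action G h' x = x \<otimes> g"
    using trans x(1) g unfolding transitive_on_N_def by blast
  have "h \<otimes>\<^bsub>holomorph G\<^esub> h' \<otimes>\<^bsub>holomorph G\<^esub> inv\<^bsub>holomorph G\<^esub> (h' \<otimes>\<^bsub>holomorph G\<^esub> h)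
      = (g [^] (a - 1), int_pow_map G 1)"
    using comm_group_AutoGroup_cyclic[OF cyc] h_carrier h' h(2) x(1) g fix_x
    by (intro holomorph_commutator_eq) auto
  moreover have "h \<otimes>\<^bsub>holomorph G\<^esub> h' \<otimes>\<^bsub>holomorph G\<^esub> inv\<^bsub>holomorph G\<^esub> (h' \<otimes>\<^bsub>holomorph G\<^esub> h) \<in> H"
    using h(1) h'(1) by simp
  ultimately show ?thesis
    by simp
qed

lemma (in group) transitive_subgroup_holomorph_obtains_elem:
  assumes g: "g \<in> carrier G" and gen: "carrier G = range (\<lambda>k::int. g [^] k)"
    and ord_g: "ord g = p ^ Suc k" and p: "prime p"
    and H: "subgroup H (holomorph G)" and trans: "transitive_on_N G H"
  obtains a b where "(g [^] b, int_pow_map G a) \<in> H" "int p dvd a - 1" "\<not> int p dvd b"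
proof (cases "\<exists>h\<in>H. \<exists>a. snd h = int_pow_map G a \<and> \<not> int p dvd a - 1")
  case True
  then obtain h a where h: "h \<in> H" "snd h = int_pow_map G a" and a: "\<not> int p dvd a - 1"
    by blast
  have "coprime (a - 1) (int (ord g))"
    using a p by (simp add: ord_g coprime_commute prime_imp_coprime)
  with h have "(g [^] (a - 1), int_pow_map G 1) \<in> H"
    by (intro transitive_subgroup_holomorph_contains_translation[OF g gen H trans])
  with a show thesis
    by (intro that[where a = 1 and b = "a - 1"]) simp_all
next
  case False
  obtain h where h: "h \<in> H" "hol_action G h \<one> = g"
    using trans g unfolding transitive_on_N_def by blast
  then have h_carrier: "h \<in> carrier (holomorph G)"
    using H subgroup.subset by blast
  then obtain a where a: "snd h = int_pow_map G a"
    using g gen by (metis holomorph_carrier_iff auto_cyclic_eq_int_pow_map)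
  have "fst h = g"
    using h(2) h_carrier by (simp add: hol_action_def holomorph_carrier_iff auto_one)
  then have "(g [^] (1::int), int_pow_map G a) \<in> H"
    using h(1) a g by (metis int_pow_1 prod.collapse)
  moreover have "int p dvd a - 1"
    using False h(1) a by blast
  ultimately show thesis
    using p by (intro that) (auto simp: prime_gt_1_int)
qed

theorem lemma4p1:
  fixes N :: "('a, 'b) monoid_scheme" and p e :: nat
  assumes "group N" and "cyclic_group N"
    and "prime p" and "odd p" and "e \<ge> 2"
    and "finite (carrier N)" and "card (carrier N) = p ^ e"
    and "subgroup H (holomorph N)" and "transitive_on_N N H"
  shows "\<exists>h\<in>H. group.ord (holomorph N) h = p ^ e"
proof -
  interpret N: group N by fact
  obtain g where g: "g \<in> carrier N" and gen_g: "subgroup_generated N {g} = N"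
    using assms(2) unfolding cyclic_group_def by blast
  have gen: "carrier N = range (\<lambda>k::int. g [^]\<^bsub>N\<^esub> k)"
    using N.carrier_subgroup_generated_by_singleton[OF g] gen_g by simp
  have order: "order N = p ^ e"
    using assms(7) by (simp add: order_def)
  then have ord_g: "N.ord g = p ^ e"
    using N.cyclic_order_is_ord[OF g] gen_g by simp
  obtain k where e: "e = Suc k"
    using assms(5) by (cases e) auto
  obtain a b where h: "(g [^]\<^bsub>N\<^esub> b, int_pow_map N a) \<in> H" and ab: "int p dvd a - 1" "\<not> int p dvd b"
    using N.transitive_subgroup_holomorph_obtains_elem[OF g gen ord_g[unfolded e] assms(3,8,9)] .
  have "(g [^]\<^bsub>N\<^esub> b, int_pow_map N a) \<in> carrier (holomorph N)"
    using h assms(8) subgroup.subset by blast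
  then have "group.ord (holomorph N) (g [^]\<^bsub>N\<^esub> b, int_pow_map N a) = p ^ e"
    using N.ord_holomorph_int_pow_map[OF _ g _ assms(3,4) ab] order ord_g by (simp add: e)
  with h show ?thesis ..
qed

end
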